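(* Let $\alpha>-1$, let $\phi$ be an analytic self-map of $\mathbb{D}$ with $\phi(0)=0$, and let $\psi$ be analytic on $\mathbb{D}$ with a zero of order $m>0$ at the origin, such that $C_{\psi,\phi}$ is bounded on $L^2_a(dA_\alpha)$. Let $\hat\psi_m$ be the $m$-th Taylor coefficient of $\psi$ at $0$. Then $W(C_{\psi,\phi})$ contains the closed disc centred at the origin with radius $\dfrac{m!\,\Gamma(\alpha+2)}{\Gamma(m+\alpha+2)+m!\,\Gamma(\alpha+2)}|\hat\psi_m|$.
   Context: $\mathbb{D}$ is the open unit disc. $L^2_a(dA_\alpha)$ is the weighted Bergman space of analytic $f$ on $\mathbb{D}$ with $\int_{\mathbb{D}}|f|^2dA_\alpha<\infty$, $dA_{\alpha}(z)=(\alpha+1)(1-|z|^2)^{\alpha}dA(z)$, $dA$ normalized area measure. $C_{\psi,\phi}f=\psi\cdot(f\circ\phi)$. $W(T)=\{\langle Tf,f\rangle:\|f\|=1\}$. *)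

theory Defs
  imports "HOL-Complex_Analysis.Complex_Analysis"
begin

definition dA_alpha :: "real \<Rightarrow> complex measure" where
  "dA_alpha \<alpha> = density (restrict_space lborel (ball 0 1))
     (\<lambda>z. ennreal ((\<alpha> + 1) * (1 - (cmod z)\<^sup>2) powr \<alpha> / pi))"

definition bergman_space :: "real \<Rightarrow> (complex \<Rightarrow> complex) set" where
  "bergman_space \<alpha> = {f. f holomorphic_on ball 0 1 \<and>
       integrable (dA_alpha \<alpha>) (\<lambda>z. (cmod (f z))\<^sup>2)}"

definition bergman_inner :: "real \<Rightarrow> (complex \<Rightarrow> complex) \<Rightarrow> (complex \<Rightarrow> complex) \<Rightarrow> complex" where
  "bergman_inner \<alpha> f g = (\<integral>z. f z * cnj (g z) \<partial>(dA_alpha \<alpha>))"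

definition bergman_norm :: "real \<Rightarrow> (complex \<Rightarrow> complex) \<Rightarrow> real" where
  "bergman_norm \<alpha> f = sqrt (\<integral>z. (cmod (f z))\<^sup>2 \<partial>(dA_alpha \<alpha>))"

definition wcomp :: "(complex \<Rightarrow> complex) \<Rightarrow> (complex \<Rightarrow> complex) \<Rightarrow> (complex \<Rightarrow> complex) \<Rightarrow> (complex \<Rightarrow> complex)" where
  "wcomp \<psi> \<phi> f = (\<lambda>z. \<psi> z * f (\<phi> z))"

definition bounded_on_bergman :: "real \<Rightarrow> ((complex \<Rightarrow> complex) \<Rightarrow> (complex \<Rightarrow> complex)) \<Rightarrow> bool" where
  "bounded_on_bergman \<alpha> T \<longleftrightarrow>
     (\<forall>f \<in> bergman_space \<alpha>. T f \<in> bergman_space \<alpha>) \<and>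
     (\<exists>K. \<forall>f \<in> bergman_space \<alpha>. bergman_norm \<alpha> (T f) \<le> K * bergman_norm \<alpha> f)"

definition numerical_range :: "real \<Rightarrow> ((complex \<Rightarrow> complex) \<Rightarrow> (complex \<Rightarrow> complex)) \<Rightarrow> complex set" where
  "numerical_range \<alpha> T = {bergman_inner \<alpha> (T f) f | f. f \<in> bergman_space \<alpha> \<and> bergman_norm \<alpha> f = 1}"

end

theory Submission
  imports Defs
begin

(* Write w_k = k! Gamma(alpha + 2) / Gamma(k + alpha + 2); it is the integral of |z|^(2k) against
   dA_alpha. Since dA_alpha is rotation invariant, averaging over rotations and Cauchy's formula on
   circles show <h, z^k> = h_k w_k for every h in the Bergman space, h_k the k-th Taylor coefficient.
   Test C = C_(psi,phi) on f = a + c z^m: C f = a psi + c psi phi^m, where psi and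
   psi phi^m vanish at 0 and psi phi^m even vanishes to order 2m > m, so only one cross term survives:
   <C f, f> = a conj(c) psi_m w_m and ||f||^2 = |a|^2 + |c|^2 w_m. Under ||f|| = 1 these values
   fill the closed disc of radius sqrt(w_m) |psi_m| / 2, which contains the disc of the theorem
   because w / (1 + w) <= sqrt(w) / 2. *)

section \<open>Rotation invariance of Lebesgue measure on the plane\<close>

lemma measurable_Complex_pair [measurable]:
  "(\<lambda>p. Complex (fst p) (snd p)) \<in> borel_measurable (lborel \<Otimes>\<^sub>M lborel)"
  by (subst borel_measurable_complex_iff) simp

lemma distr_lborel_pair_Complex:
  "distr (lborel \<Otimes>\<^sub>M lborel) borel (\<lambda>p. Complex (fst p) (snd p)) = (lborel :: complex measure)"
proof (rule lborel_eqI[symmetric])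
  fix l u :: complex
  assume box: "\<And>b. b \<in> Basis \<Longrightarrow> l \<bullet> b \<le> u \<bullet> b"
  have le: "Re l \<le> Re u" "Im l \<le> Im u"
    using box[of 1] box[of \<i>] by (auto simp: Basis_complex_def)
  have "(\<lambda>p. Complex (fst p) (snd p)) -` box l u \<inter> space (lborel \<Otimes>\<^sub>M lborel)
      = {Re l<..<Re u} \<times> {Im l<..<Im u}"
    by (auto simp: box_def Basis_complex_def space_pair_measure)
  then show "emeasure (distr (lborel \<Otimes>\<^sub>M lborel) borel (\<lambda>p. Complex (fst p) (snd p))) (box l u)
      = (\<Prod>b\<in>Basis. (u - l) \<bullet> b)"
    using le by (simp add: emeasure_distr lborel.emeasure_pair_measure_Times Basis_complex_def ennreal_mult)
qed simp

lemma lborel_pair_distr_shear_snd: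
  fixes g :: "real \<Rightarrow> real"
  assumes [measurable]: "g \<in> borel_measurable borel"
  shows "distr (lborel \<Otimes>\<^sub>M lborel) (lborel \<Otimes>\<^sub>M lborel) (\<lambda>p. (fst p, snd p + g (fst p)))
    = lborel \<Otimes>\<^sub>M lborel" (is "distr ?P ?P ?S = ?P")
proof (rule measure_eqI)
  fix A assume "A \<in> sets (distr ?P ?P ?S)"
  then have A [measurable]: "A \<in> sets ?P" by simp
  have S: "?S \<in> measurable ?P ?P" by measurable
  have SA: "?S -` A \<in> sets ?P"
    using measurable_sets[OF S A] by (simp add: space_pair_measure)
  have translate: "emeasure lborel ((+) (g x) -` B) = emeasure lborel B" if "B \<in> sets borel" for x B
    using emeasure_distr[of "(+) (g x)" lborel borel B] lborel_distr_plus[of "g x"] that by simp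
  have "emeasure (distr ?P ?P ?S) A = emeasure ?P (?S -` A)"
    by (simp add: emeasure_distr[OF S A] space_pair_measure)
  also have "\<dots> = (\<integral>\<^sup>+x. emeasure lborel (Pair x -` (?S -` A)) \<partial>lborel)"
    by (rule lborel.emeasure_pair_measure_alt[OF SA])
  also have "\<dots> = (\<integral>\<^sup>+x. emeasure lborel (Pair x -` A) \<partial>lborel)"
  proof (rule nn_integral_cong)
    fix x
    have "Pair x -` (?S -` A) = (+) (g x) -` (Pair x -` A)" by (auto simp: add.commute)
    then show "emeasure lborel (Pair x -` (?S -` A)) = emeasure lborel (Pair x -` A)"
      using translate[of "Pair x -` A"] A by (simp add: sets_Pair1)
  qed
  also have "\<dots> = emeasure ?P A"
    by (rule lborel.emeasure_pair_measure_alt[OF A, symmetric])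
  finally show "emeasure (distr ?P ?P ?S) A = emeasure ?P A" .
qed simp

lemma lborel_pair_distr_shear_fst:
  fixes g :: "real \<Rightarrow> real"
  assumes [measurable]: "g \<in> borel_measurable borel"
  shows "distr (lborel \<Otimes>\<^sub>M lborel) (lborel \<Otimes>\<^sub>M lborel) (\<lambda>p. (fst p + g (snd p), snd p))
    = lborel \<Otimes>\<^sub>M lborel" (is "distr ?P ?P ?S = ?P")
proof -
  let ?swap = "\<lambda>(x :: real, y :: real). (y, x)"
  let ?Y = "\<lambda>p. (fst p, snd p + g (fst p))"
  have swap: "?swap \<in> measurable ?P ?P" by (rule measurable_pair_swap')
  have Y: "?Y \<in> measurable ?P ?P" by measurable
  have "?S = ?swap \<circ> (?Y \<circ> ?swap)" by auto
  then have "distr ?P ?P ?S = distr (distr (distr ?P ?P ?swap) ?P ?Y) ?P ?swap"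
    using swap Y by (simp add: distr_distr measurable_comp)
  also have "\<dots> = ?P"
    by (simp only: lborel_pair.distr_pair_swap[symmetric] lborel_pair_distr_shear_snd[OF assms])
  finally show ?thesis .
qed

lemma lborel_pair_distr_rotation:
  fixes c s :: real
  assumes "c\<^sup>2 + s\<^sup>2 = 1" and "c \<noteq> -1"
  shows "distr (lborel \<Otimes>\<^sub>M lborel) (lborel \<Otimes>\<^sub>M lborel)
      (\<lambda>p. (c * fst p - s * snd p, s * fst p + c * snd p)) = lborel \<Otimes>\<^sub>M lborel"
    (is "distr ?P ?P ?R = ?P")
proof -
  \<comment> \<open>A rotation by \<open>\<theta>\<close> is a product of three shears, with \<open>t = tan (\<theta>/2)\<close>.\<close>
  define t where "t = s / (1 + c)"
  have "1 + c \<noteq> 0" using assms(2) by linarith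
  then have tc: "t * (1 + c) = s" by (simp add: t_def)
  have "s\<^sup>2 = (1 - c) * (1 + c)" using assms(1) by (simp add: algebra_simps power2_eq_square)
  then have ts: "t * s = 1 - c" using \<open>1 + c \<noteq> 0\<close> by (simp add: t_def power2_eq_square)
  let ?X = "\<lambda>p :: real \<times> real. (fst p + (- t) * snd p, snd p)"
  let ?Y = "\<lambda>p :: real \<times> real. (fst p, snd p + s * fst p)"
  have mX: "?X \<in> measurable ?P ?P" by measurable
  have mY: "?Y \<in> measurable ?P ?P" by measurable
  have "?R = ?X \<circ> ?Y \<circ> ?X"
  proof
    fix p :: "real \<times> real"
    have "fst p - t * snd p - t * (snd p + s * (fst p - t * snd p))
        = (1 - t * s) * fst p - t * (1 + (1 - t * s)) * snd p"
      by (simp add: algebra_simps)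
    then have first: "c * fst p - s * snd p = fst p - t * snd p - t * (snd p + s * (fst p - t * snd p))"
      by (simp add: ts tc)
    have "snd p + s * (fst p - t * snd p) = s * fst p + (1 - t * s) * snd p"
      by (simp add: algebra_simps)
    then have "s * fst p + c * snd p = snd p + s * (fst p - t * snd p)"
      by (simp add: ts)
    with first show "?R p = (?X \<circ> ?Y \<circ> ?X) p" by simp
  qed
  moreover have "distr ?P ?P ?X = ?P" "distr ?P ?P ?Y = ?P"
    using lborel_pair_distr_shear_fst[of "\<lambda>y. - t * y"] lborel_pair_distr_shear_snd[of "\<lambda>x. s * x"]
    by simp_all
  moreover have "distr (distr (distr ?P ?P ?X) ?P ?Y) ?P ?X = distr ?P ?P (?X \<circ> (?Y \<circ> ?X))"
    using mX mY by (simp add: distr_distr measurable_comp)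
  ultimately show ?thesis
    by (simp add: comp_assoc)
qed

lemma lborel_distr_mult_unit:
  fixes u :: complex
  assumes u: "norm u = 1"
  shows "distr lborel borel (\<lambda>z. u * z) = (lborel :: complex measure)"
proof (cases "u = -1")
  case True
  then show ?thesis
    using lborel_affine[of "-1 :: real" "0 :: complex"] by (simp add: density_1)
next
  case False
  let ?P = "lborel \<Otimes>\<^sub>M lborel :: (real \<times> real) measure"
  let ?C = "\<lambda>p. Complex (fst p) (snd p)"
  let ?R = "\<lambda>p. (Re u * fst p - Im u * snd p, Im u * fst p + Re u * snd p)"
  have circle: "(Re u)\<^sup>2 + (Im u)\<^sup>2 = 1"
    using u by (metis cmod_power2 one_power2)
  moreover have "Re u \<noteq> -1"
    using False circle by (auto simp: complex_eq_iff)
  ultimately have rotation: "distr ?P ?P ?R = ?P"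
    by (rule lborel_pair_distr_rotation)
  have R: "?R \<in> measurable ?P ?P" by measurable
  have "(\<lambda>z. u * z) \<circ> ?C = ?C \<circ> ?R"
    by (auto simp: complex_eq_iff)
  then have "distr (distr ?P borel ?C) borel (\<lambda>z. u * z) = distr (distr ?P ?P ?R) borel ?C"
    using R by (simp add: distr_distr)
  then show ?thesis
    by (simp add: distr_lborel_pair_Complex rotation)
qed

section \<open>Rotations and radial integrals for \<open>dA_alpha\<close>\<close>

abbreviation lborel_disc :: "complex measure" where
  "lborel_disc \<equiv> restrict_space lborel (ball 0 1)"

lemma measurable_mult_unit_lborel_disc:
  assumes "norm u = 1"
  shows "(\<lambda>z. u * z) \<in> measurable lborel_disc lborel_disc"
proof (rule measurable_restrict_space2)
  show "(\<lambda>z. u * z) \<in> space lborel_disc \<rightarrow> ball 0 1"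
    using assms by (auto simp: space_restrict_space norm_mult)
qed (intro measurable_restrict_space1; simp)

lemma lborel_disc_distr_mult_unit:
  assumes u: "norm u = 1"
  shows "distr lborel_disc lborel_disc (\<lambda>z. u * z) = lborel_disc"
proof (rule measure_eqI)
  fix A assume "A \<in> sets (distr lborel_disc lborel_disc (\<lambda>z. u * z))"
  then have A: "A \<subseteq> ball 0 1" "A \<in> sets borel" by (auto simp: sets_restrict_space_iff)
  have "(\<lambda>z. u * z) -` A \<inter> space lborel_disc = (\<lambda>z. u * z) -` A"
    using A u by (auto simp: space_restrict_space norm_mult)
  moreover have "(\<lambda>z. u * z) -` A \<subseteq> ball 0 1"
    using A u by (auto simp: norm_mult)
  ultimately have "emeasure (distr lborel_disc lborel_disc (\<lambda>z. u * z)) A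
      = emeasure (distr lborel borel (\<lambda>z. u * z)) A"
    using A measurable_mult_unit_lborel_disc[OF u]
    by (simp add: emeasure_distr emeasure_restrict_space sets_restrict_space_iff)
  then show "emeasure (distr lborel_disc lborel_disc (\<lambda>z. u * z)) A = emeasure lborel_disc A"
    using A by (simp add: lborel_distr_mult_unit[OF u] emeasure_restrict_space)
qed simp

lemma sets_dA_alpha [simp, measurable_cong]: "sets (dA_alpha \<alpha>) = sets lborel_disc"
  by (simp add: dA_alpha_def)

lemma space_dA_alpha [simp]: "space (dA_alpha \<alpha>) = ball 0 1"
  by (simp add: dA_alpha_def space_restrict_space)

lemma dA_alpha_distr_mult_unit:
  assumes u: "norm u = 1"
  shows "distr (dA_alpha \<alpha>) lborel_disc (\<lambda>z. u * z) = dA_alpha \<alpha>"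
proof -
  let ?w = "\<lambda>z. ennreal ((\<alpha> + 1) * (1 - (cmod z)\<^sup>2) powr \<alpha> / pi)"
  have [measurable]: "?w \<in> borel_measurable lborel_disc"
    by (intro measurable_restrict_space1) measurable
  have "dA_alpha \<alpha> = density lborel_disc (\<lambda>z. ?w (u * z))"
    using u by (simp add: dA_alpha_def norm_mult)
  then have "distr (dA_alpha \<alpha>) lborel_disc (\<lambda>z. u * z)
      = density (distr lborel_disc lborel_disc (\<lambda>z. u * z)) ?w"
    using measurable_mult_unit_lborel_disc[OF u] by (simp add: density_distr)
  then show ?thesis
    by (simp add: lborel_disc_distr_mult_unit[OF u] dA_alpha_def)
qed

lemma
  fixes f :: "complex \<Rightarrow> 'b::{banach, second_countable_topology}"
  assumes u: "norm u = 1" and f: "f \<in> borel_measurable (dA_alpha \<alpha>)"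
  shows integral_dA_alpha_mult_unit: "(\<integral>z. f (u * z) \<partial>dA_alpha \<alpha>) = (\<integral>z. f z \<partial>dA_alpha \<alpha>)"
    and integrable_dA_alpha_mult_unit_iff:
      "integrable (dA_alpha \<alpha>) (\<lambda>z. f (u * z)) \<longleftrightarrow> integrable (dA_alpha \<alpha>) f"
proof -
  have m: "(\<lambda>z. u * z) \<in> measurable (dA_alpha \<alpha>) lborel_disc"
    using measurable_mult_unit_lborel_disc[OF u] by (simp cong: measurable_cong_sets)
  have f': "f \<in> borel_measurable lborel_disc"
    using f by (simp cong: measurable_cong_sets)
  show "(\<integral>z. f (u * z) \<partial>dA_alpha \<alpha>) = (\<integral>z. f z \<partial>dA_alpha \<alpha>)"
    using integral_distr[OF m f'] by (simp add: dA_alpha_distr_mult_unit[OF u])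
  show "integrable (dA_alpha \<alpha>) (\<lambda>z. f (u * z)) \<longleftrightarrow> integrable (dA_alpha \<alpha>) f"
    using integrable_distr_eq[OF m f'] by (simp add: dA_alpha_distr_mult_unit[OF u])
qed

lemma emeasure_unit_disc_minus_cball:
  fixes r :: real
  assumes "0 \<le> r" and "r < 1"
  shows "emeasure lborel (ball (0 :: complex) 1 - cball 0 r) = pi * (1 - r\<^sup>2)"
proof -
  have "cball (0 :: complex) r \<subseteq> ball 0 1"
    using assms by (simp add: cball_subset_ball_iff)
  then have "emeasure lborel (ball 0 1 - cball (0 :: complex) r) = ennreal pi - ennreal (pi * r\<^sup>2)"
    using assms by (simp add: emeasure_Diff emeasure_ball emeasure_cball unit_ball_vol_2)
  also have "\<dots> = pi * (1 - r\<^sup>2)"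
    using assms by (simp add: ennreal_minus right_diff_distrib)
  finally show ?thesis .
qed

lemma emeasure_disc_norm_sq_greater:
  fixes x :: real
  shows "emeasure lborel (ball (0 :: complex) 1 \<inter> {z. x < (cmod z)\<^sup>2}) = pi * emeasure lborel ({0..<1} \<inter> {x<..})"
proof (cases "x < 0")
  case True
  then have "ball 0 1 \<inter> {z. x < (cmod z)\<^sup>2} = ball (0 :: complex) 1" "{0..<1} \<inter> {x<..} = {0..<1 :: real}"
    by (auto intro: less_le_trans[OF _ zero_le_power2])
  then show ?thesis
    by (simp add: emeasure_ball unit_ball_vol_2)
next
  case False
  have "cmod z \<le> sqrt x \<longleftrightarrow> (cmod z)\<^sup>2 \<le> x" for z :: complex
    by (metis norm_ge_zero real_sqrt_le_iff real_sqrt_unique)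
  then have "ball 0 1 \<inter> {z. x < (cmod z)\<^sup>2} = ball 0 1 - cball (0 :: complex) (sqrt x)"
    by (auto simp: not_le)
  moreover have "{0..<1} \<inter> {x<..} = {x<..<1 :: real}"
    using False by auto
  moreover have "emeasure lborel (ball 0 1 - cball (0 :: complex) (sqrt x)) = pi * emeasure lborel {x<..<1}"
  proof (cases "x < 1")
    case True
    with False show ?thesis
      by (simp add: emeasure_unit_disc_minus_cball flip: ennreal_mult)
  next
    case False
    then have "ball 0 1 \<subseteq> cball (0 :: complex) (sqrt x)"
      by (simp add: ball_subset_cball_iff)
    then have "emeasure lborel (ball 0 1 - cball (0 :: complex) (sqrt x)) = 0"
      by (simp only: Diff_eq_empty_iff[THEN iffD2] emeasure_empty)
    with False show ?thesis
      by simp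
  qed
  ultimately show ?thesis
    by simp
qed

lemma distr_lborel_disc_norm_sq:
  "distr lborel_disc borel (\<lambda>z. (cmod z)\<^sup>2) = density lborel (\<lambda>s. ennreal pi * indicator {0..<1} s)"
proof (rule measure_eqI_lessThan)
  have [measurable]: "(\<lambda>z. (cmod z)\<^sup>2) \<in> borel_measurable lborel_disc"
    by (intro measurable_restrict_space1) measurable
  have distr: "emeasure (distr lborel_disc borel (\<lambda>z. (cmod z)\<^sup>2)) {x<..}
      = pi * emeasure lborel ({0..<1} \<inter> {x<..})" for x :: real
    using emeasure_disc_norm_sq_greater[of x]
    by (simp add: emeasure_distr emeasure_restrict_space space_restrict_space vimage_def Int_commute)
  show "emeasure (distr lborel_disc borel (\<lambda>z. (cmod z)\<^sup>2)) {x<..} < \<infinity>" for x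
  proof -
    have "emeasure lborel ({0..<1} \<inter> {x<..}) \<le> emeasure lborel {0..<1 :: real}"
      by (intro emeasure_mono) auto
    then have "emeasure lborel ({0..<1} \<inter> {x<..}) < \<infinity>"
      by (simp add: le_less_trans)
    then show ?thesis
      by (simp add: distr ennreal_mult_less_top)
  qed
  have "(\<lambda>s. ennreal pi * indicator {0..<1 :: real} s) \<in> borel_measurable lborel"
    by measurable
  from emeasure_density[OF this]
  show "emeasure (distr lborel_disc borel (\<lambda>z. (cmod z)\<^sup>2)) {x<..}
      = emeasure (density lborel (\<lambda>s. ennreal pi * indicator {0..<1} s)) {x<..}" for x
    by (simp add: distr nn_integral_cmult_indicator mult.assoc flip: indicator_inter_arith)
qed simp_all

lemma nn_integral_dA_alpha_radial:
  assumes "\<alpha> > -1" and [measurable]: "g \<in> borel_measurable borel"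
  shows "(\<integral>\<^sup>+z. g ((cmod z)\<^sup>2) \<partial>dA_alpha \<alpha>)
    = (\<integral>\<^sup>+s. ennreal ((\<alpha> + 1) * (1 - s) powr \<alpha>) * indicator {0..<1} s * g s \<partial>lborel)"
proof -
  let ?w = "\<lambda>s. ennreal ((\<alpha> + 1) * (1 - s) powr \<alpha> / pi)"
  have [measurable]: "(\<lambda>z. (cmod z)\<^sup>2) \<in> borel_measurable lborel_disc"
    by (intro measurable_restrict_space1) measurable
  have "(\<integral>\<^sup>+z. g ((cmod z)\<^sup>2) \<partial>dA_alpha \<alpha>)
      = (\<integral>\<^sup>+z. ?w ((cmod z)\<^sup>2) * g ((cmod z)\<^sup>2) \<partial>lborel_disc)"
    unfolding dA_alpha_def by (subst nn_integral_density) auto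
  also have "\<dots> = (\<integral>\<^sup>+s. ?w s * g s \<partial>distr lborel_disc borel (\<lambda>z. (cmod z)\<^sup>2))"
    by (subst nn_integral_distr) auto
  also have "\<dots> = (\<integral>\<^sup>+s. ennreal pi * indicator {0..<1} s * (?w s * g s) \<partial>lborel)"
    unfolding distr_lborel_disc_norm_sq by (subst nn_integral_density) auto
  also have "\<dots> = (\<integral>\<^sup>+s. ennreal ((\<alpha> + 1) * (1 - s) powr \<alpha>) * indicator {0..<1} s * g s \<partial>lborel)"
  proof (rule nn_integral_cong)
    fix s :: real
    have "ennreal pi * ?w s = ennreal ((\<alpha> + 1) * (1 - s) powr \<alpha>)"
      using assms(1) by (simp flip: ennreal_mult)
    moreover have "ennreal pi * indicator {0..<1} s * (?w s * g s) = (ennreal pi * ?w s) * indicator {0..<1} s * g s"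
      by (simp only: ac_simps)
    ultimately show "ennreal pi * indicator {0..<1} s * (?w s * g s)
        = ennreal ((\<alpha> + 1) * (1 - s) powr \<alpha>) * indicator {0..<1} s * g s"
      by simp
  qed
  finally show ?thesis .
qed

definition dA_moment :: "real \<Rightarrow> nat \<Rightarrow> real" where
  "dA_moment \<alpha> k = fact k * Gamma (\<alpha> + 2) / Gamma (real k + \<alpha> + 2)"

lemma dA_moment_pos: "\<alpha> > -1 \<Longrightarrow> dA_moment \<alpha> k > 0"
  unfolding dA_moment_def by (intro divide_pos_pos mult_pos_pos Gamma_real_pos) auto

lemma dA_moment_0:
  assumes "\<alpha> > -1"
  shows "dA_moment \<alpha> 0 = 1"
proof -
  have "Gamma (\<alpha> + 2) > 0"
    using assms by (intro Gamma_real_pos) simp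
  then show ?thesis
    by (simp add: dA_moment_def add_ac)
qed

lemma dA_moment_eq_Beta:
  assumes "\<alpha> > -1"
  shows "(\<alpha> + 1) * Beta (real (k + 1)) (\<alpha> + 1) = dA_moment \<alpha> k"
proof -
  have "\<alpha> + 1 \<notin> \<int>\<^sub>\<le>\<^sub>0"
    using assms nonpos_Ints_nonpos by fastforce
  then have "Gamma (\<alpha> + 2) = (\<alpha> + 1) * Gamma (\<alpha> + 1)"
    using Gamma_plus1[of "\<alpha> + 1"] by (simp add: add_ac)
  moreover have "Gamma (real (k + 1)) = fact k"
    using Gamma_fact[of k] by (simp add: add_ac)
  ultimately show ?thesis
    by (simp add: Beta_def dA_moment_def add_ac)
qed

lemma nn_integral_dA_alpha_norm_power:
  assumes "\<alpha> > -1"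
  shows "(\<integral>\<^sup>+z. ennreal (cmod z ^ (2 * k)) \<partial>dA_alpha \<alpha>) = ennreal (dA_moment \<alpha> k)"
proof -
  let ?beta = "\<lambda>s. (\<alpha> + 1) * (s powr (real (k + 1) - 1) * (1 - s) powr (\<alpha> + 1 - 1))"
  have "(\<integral>\<^sup>+z. ennreal (cmod z ^ (2 * k)) \<partial>dA_alpha \<alpha>)
      = (\<integral>\<^sup>+z. ennreal (((cmod z)\<^sup>2) ^ k) \<partial>dA_alpha \<alpha>)"
    by (simp add: power_mult)
  also have "\<dots>
      = (\<integral>\<^sup>+s. ennreal ((\<alpha> + 1) * (1 - s) powr \<alpha>) * indicator {0..<1} s * ennreal (s ^ k) \<partial>lborel)"
    using assms by (rule nn_integral_dA_alpha_radial) measurable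
  also have "\<dots> = (\<integral>\<^sup>+s. ennreal (?beta s) * indicator {0..1} s \<partial>lborel)"
  proof (rule nn_integral_cong_AE)
    have "AE s in lborel. s \<noteq> 0" "AE s in lborel. s \<noteq> 1"
      by (simp_all add: AE_lborel_singleton)
    then show "AE s in lborel. ennreal ((\<alpha> + 1) * (1 - s) powr \<alpha>) * indicator {0..<1} s * ennreal (s ^ k)
        = ennreal (?beta s) * indicator {0..1} s"
    proof eventually_elim
      case (elim s)
      show ?case
      proof (cases "s \<in> {0<..<1}")
        case True
        then have "s ^ k = s powr (real (k + 1) - 1)" by (simp add: powr_realpow)
        with True assms show ?thesis by (simp add: mult_ac flip: ennreal_mult)
      next
        case False
        with elim show ?thesis by (auto simp: indicator_def)
      qed
    qed
  qed
  also have "\<dots> = ennreal ((\<alpha> + 1) * Beta (real (k + 1)) (\<alpha> + 1))"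
  proof (rule nn_integral_has_integral_lebesgue')
    show "((\<lambda>s. ?beta s) has_integral (\<alpha> + 1) * Beta (real (k + 1)) (\<alpha> + 1)) {0..1}"
      using assms by (intro has_integral_mult_right has_integral_Beta_real) auto
  qed (use assms in auto)
  also have "(\<alpha> + 1) * Beta (real (k + 1)) (\<alpha> + 1) = dA_moment \<alpha> k"
    using assms by (rule dA_moment_eq_Beta)
  finally show ?thesis .
qed

lemma finite_measure_dA_alpha: "\<alpha> > -1 \<Longrightarrow> finite_measure (dA_alpha \<alpha>)"
  using nn_integral_dA_alpha_norm_power[of \<alpha> 0] dA_moment_0[of \<alpha>]
  by (intro finite_measureI) simp

lemma borel_measurable_dA_alpha_continuous_on:
  assumes "continuous_on (ball 0 1) f"
  shows "f \<in> borel_measurable (dA_alpha \<alpha>)"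
proof -
  have "f \<in> borel_measurable (restrict_space borel (ball 0 1))"
    using assms by (rule borel_measurable_continuous_on_restrict)
  then show ?thesis
    by (simp cong: measurable_cong_sets add: sets_restrict_space)
qed

lemma
  assumes "\<alpha> > -1"
  shows integrable_dA_alpha_norm_power: "integrable (dA_alpha \<alpha>) (\<lambda>z. cmod z ^ (2 * k))"
    and integral_dA_alpha_norm_power: "(\<integral>z. cmod z ^ (2 * k) \<partial>dA_alpha \<alpha>) = dA_moment \<alpha> k"
proof -
  have m: "(\<lambda>z. cmod z ^ (2 * k)) \<in> borel_measurable (dA_alpha \<alpha>)"
    by (intro borel_measurable_dA_alpha_continuous_on continuous_intros)
  show "integrable (dA_alpha \<alpha>) (\<lambda>z. cmod z ^ (2 * k))"
    using m nn_integral_dA_alpha_norm_power[OF assms, of k] by (intro integrableI_nonneg) auto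
  show "(\<integral>z. cmod z ^ (2 * k) \<partial>dA_alpha \<alpha>) = dA_moment \<alpha> k"
    using m nn_integral_dA_alpha_norm_power[OF assms, of k] dA_moment_pos[OF assms, of k]
    by (subst integral_eq_nn_integral) auto
qed

section \<open>Taylor coefficients as integrals against \<open>dA_alpha\<close>\<close>

lemma unit_circle_higher_deriv:
  fixes g :: "complex \<Rightarrow> complex"
  assumes g: "g holomorphic_on S" and S: "open S" "cball 0 1 \<subseteq> S"
  shows "((\<lambda>t. g (cis (2 * pi * t)) * cnj (cis (2 * pi * t)) ^ k)
    has_integral (deriv ^^ k) g 0 / fact k) {0..1}"
proof -
  have "((\<lambda>w. g w / (w - 0) ^ Suc k) has_contour_integral (2 * pi * \<i> / fact k * (deriv ^^ k) g 0))
      (circlepath 0 1)"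
  proof (rule Cauchy_has_contour_integral_higher_derivative_circlepath)
    show "continuous_on (cball 0 1) g"
      using holomorphic_on_imp_continuous_on[OF g] S(2) by (rule continuous_on_subset)
    show "g holomorphic_on ball 0 1"
      using g S(2) ball_subset_cball by (meson holomorphic_on_subset order_trans)
  qed simp
  then have integral: "((\<lambda>t. g (cis (2 * pi * t)) / cis (2 * pi * t) ^ Suc k * (2 * pi * \<i> * cis (2 * pi * t)))
      has_integral (2 * pi * \<i> / fact k * (deriv ^^ k) g 0)) {0..1}"
    unfolding has_contour_integral vector_derivative_circlepath
    by (simp add: circlepath cis_conv_exp mult_ac)
  have integrand: "1 / (2 * pi * \<i>) * (g (cis (2 * pi * t)) / cis (2 * pi * t) ^ Suc k * (2 * pi * \<i> * cis (2 * pi * t)))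
      = g (cis (2 * pi * t)) * cnj (cis (2 * pi * t)) ^ k" for t
  proof -
    have "cnj (cis (2 * pi * t)) ^ k = inverse (cis (2 * pi * t) ^ k)"
      by (simp add: cis_cnj flip: cis_inverse power_inverse)
    then show ?thesis
      by (simp add: field_simps)
  qed
  have factor: "1 / (2 * pi * \<i>) * (2 * pi * \<i> / fact k * (deriv ^^ k) g 0) = (deriv ^^ k) g 0 / fact k"
    by simp
  show ?thesis
    using has_integral_mult_right[OF integral, of "1 / (2 * pi * \<i>)"] unfolding integrand factor .
qed

lemma circle_average_higher_deriv:
  fixes h :: "complex \<Rightarrow> complex"
  assumes h: "h holomorphic_on ball 0 1" and z: "cmod z < 1"
  shows "((\<lambda>t. h (cis (2 * pi * t) * z) * cnj (cis (2 * pi * t)) ^ k)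
    has_integral (deriv ^^ k) h 0 / fact k * z ^ k) {0..1}"
proof -
  define S where "S = {w. cmod (z * w) < 1}"
  have "open S"
    unfolding S_def by (intro open_Collect_less continuous_intros)
  moreover have "cmod z * cmod w < 1" if "cmod w \<le> 1" for w
    using z that mult_left_le[of "cmod w" "cmod z"] by simp
  then have "cball 0 1 \<subseteq> S"
    by (auto simp: S_def norm_mult)
  ultimately have S: "open S" "cball 0 1 \<subseteq> S" .
  have into_disc: "z * w \<in> ball 0 1" if "w \<in> S" for w
    using that by (simp add: S_def)
  then have "(\<lambda>w. z * w) ` S \<subseteq> ball 0 1"
    by blast
  from holomorphic_on_compose_gen[OF _ h this]
  have "(\<lambda>w. h (z * w)) holomorphic_on S"
    by (simp add: o_def)
  from unit_circle_higher_deriv[OF this S, of k]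
  have "((\<lambda>t. h (cis (2 * pi * t) * z) * cnj (cis (2 * pi * t)) ^ k)
      has_integral (deriv ^^ k) (\<lambda>w. h (z * w)) 0 / fact k) {0..1}"
    by (simp add: mult.commute)
  moreover have "0 \<in> S"
    using S(2) by auto
  then have "(deriv ^^ k) (\<lambda>w. h (z * w)) 0 = z ^ k * (deriv ^^ k) h 0"
    using higher_deriv_compose_linear[OF h S(1) open_ball, of 0 z k] into_disc by simp
  ultimately show ?thesis
    by (simp add: mult.commute)
qed

lemma measurable_circle_action_dA_alpha:
  "(\<lambda>p. cis (2 * pi * fst p) * snd p) \<in> measurable (lborel \<Otimes>\<^sub>M dA_alpha \<alpha>) (dA_alpha \<alpha>)"
proof -
  have "(\<lambda>p. cis (2 * pi * fst p) * snd p) \<in> measurable (lborel \<Otimes>\<^sub>M dA_alpha \<alpha>) lborel_disc"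
  proof (rule measurable_restrict_space2)
    show "(\<lambda>p. cis (2 * pi * fst p) * snd p) \<in> space (lborel \<Otimes>\<^sub>M dA_alpha \<alpha>) \<rightarrow> ball 0 1"
      by (auto simp: space_pair_measure norm_mult)
    have "(\<lambda>z. z) \<in> borel_measurable (dA_alpha \<alpha>)"
      by (intro borel_measurable_dA_alpha_continuous_on continuous_intros)
    from measurable_compose[OF measurable_snd[of lborel "dA_alpha \<alpha>"] this]
    have [measurable]: "snd \<in> borel_measurable (lborel \<Otimes>\<^sub>M dA_alpha \<alpha>)"
      by simp
    have "(\<lambda>p. cis (2 * pi * fst p) * snd p) \<in> borel_measurable (lborel \<Otimes>\<^sub>M dA_alpha \<alpha>)"
      unfolding cis_conv_exp by measurable
    then show "(\<lambda>p. cis (2 * pi * fst p) * snd p) \<in> measurable (lborel \<Otimes>\<^sub>M dA_alpha \<alpha>) lborel"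
      by simp
  qed
  then show ?thesis
    by (simp cong: measurable_cong_sets)
qed

lemma
  fixes F :: "complex \<Rightarrow> complex"
  assumes "\<alpha> > -1" and F: "integrable (dA_alpha \<alpha>) F"
  shows integrable_circle_action_dA_alpha:
      "integrable (lborel \<Otimes>\<^sub>M dA_alpha \<alpha>) (\<lambda>(t, z). indicator {0..1} t *\<^sub>R F (cis (2 * pi * t) * z))"
    and integral_circle_action_dA_alpha:
      "(\<integral>t. (\<integral>z. indicator {0..1} t *\<^sub>R F (cis (2 * pi * t) * z) \<partial>dA_alpha \<alpha>) \<partial>lborel)
        = (\<integral>z. F z \<partial>dA_alpha \<alpha>)"
proof -
  let ?dA = "dA_alpha \<alpha>"
  let ?\<Phi> = "\<lambda>t z. indicator {0..1} t *\<^sub>R F (cis (2 * pi * t) * z)"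
  interpret dA: finite_measure ?dA
    using assms(1) by (rule finite_measure_dA_alpha)
  interpret P: pair_sigma_finite lborel ?dA
    by (intro pair_sigma_finite.intro sigma_finite_lborel dA.sigma_finite_measure_axioms)
  have F_measurable: "F \<in> borel_measurable ?dA"
    using F by (rule borel_measurable_integrable)
  from measurable_compose[OF measurable_circle_action_dA_alpha this]
  have \<Phi>: "case_prod ?\<Phi> \<in> borel_measurable (lborel \<Otimes>\<^sub>M ?dA)"
    unfolding case_prod_beta by measurable
  have rotated: "integrable ?dA (\<lambda>z. F (cis (2 * pi * t) * z))"
    and integral_rotated: "(\<integral>z. F (cis (2 * pi * t) * z) \<partial>?dA) = (\<integral>z. F z \<partial>?dA)"
    and integral_norm_rotated: "(\<integral>z. norm (F (cis (2 * pi * t) * z)) \<partial>?dA) = (\<integral>z. norm (F z) \<partial>?dA)" for t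
    using integrable_dA_alpha_mult_unit_iff[of _ F] integral_dA_alpha_mult_unit[of _ F]
      integral_dA_alpha_mult_unit[of _ "\<lambda>z. norm (F z)"] F F_measurable
    by auto
  show "integrable (lborel \<Otimes>\<^sub>M ?dA) (case_prod ?\<Phi>)"
  proof (rule P.Fubini_integrable[OF \<Phi>])
    have "(\<lambda>t. \<integral>z. norm (case_prod ?\<Phi> (t, z)) \<partial>?dA) = (\<lambda>t. indicator {0..1} t *\<^sub>R (\<integral>z. norm (F z) \<partial>?dA))"
      by (auto simp: integral_norm_rotated indicator_def)
    moreover have "integrable lborel (\<lambda>t. indicator {0..1 :: real} t *\<^sub>R (\<integral>z. norm (F z) \<partial>?dA))"
      by (intro integrable_scaleR_left integrable_real_indicator) auto
    ultimately show "integrable lborel (\<lambda>t. \<integral>z. norm (case_prod ?\<Phi> (t, z)) \<partial>?dA)"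
      by simp
    show "AE t in lborel. integrable ?dA (\<lambda>z. case_prod ?\<Phi> (t, z))"
      by (intro AE_I2) (simp add: rotated)
  qed
  show "(\<integral>t. (\<integral>z. ?\<Phi> t z \<partial>?dA) \<partial>lborel) = (\<integral>z. F z \<partial>?dA)"
    by (simp add: integral_rotated)
qed

lemma integral_dA_alpha_circle_average:
  fixes F :: "complex \<Rightarrow> complex"
  assumes "\<alpha> > -1" and F: "integrable (dA_alpha \<alpha>) F"
  shows "(\<integral>z. F z \<partial>dA_alpha \<alpha>) = (\<integral>z. (LINT t:{0..1}|lborel. F (cis (2 * pi * t) * z)) \<partial>dA_alpha \<alpha>)"
proof -
  interpret dA: finite_measure "dA_alpha \<alpha>"
    using assms(1) by (rule finite_measure_dA_alpha)
  interpret P: pair_sigma_finite lborel "dA_alpha \<alpha>"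
    by (intro pair_sigma_finite.intro sigma_finite_lborel dA.sigma_finite_measure_axioms)
  show ?thesis
    unfolding set_lebesgue_integral_def integral_circle_action_dA_alpha[OF assms, symmetric]
    by (rule P.Fubini_integral[OF integrable_circle_action_dA_alpha[OF assms], symmetric])
qed

lemma integral_dA_alpha_mult_cnj_power:
  fixes h :: "complex \<Rightarrow> complex"
  assumes "\<alpha> > -1" and h: "h holomorphic_on ball 0 1"
    and integrable: "integrable (dA_alpha \<alpha>) (\<lambda>z. h z * cnj (z ^ k))"
  shows "(\<integral>z. h z * cnj (z ^ k) \<partial>dA_alpha \<alpha>) = (deriv ^^ k) h 0 / fact k * dA_moment \<alpha> k"
proof -
  let ?c = "(deriv ^^ k) h 0 / fact k"
  have continuous: "continuous_on (ball 0 1) h"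
    using h by (rule holomorphic_on_imp_continuous_on)
  have circle: "(LINT t:{0..1}|lborel. h (cis (2 * pi * t) * z) * cnj ((cis (2 * pi * t) * z) ^ k))
      = ?c * cmod z ^ (2 * k)" if z: "z \<in> ball 0 1" for z
  proof -
    have "continuous_on {0..1} (\<lambda>t. h (cis (2 * pi * t) * z))"
      using z by (intro continuous_on_compose2[OF continuous] continuous_intros) (auto simp: norm_mult)
    then have integrable: "set_integrable lborel {0..1}
        (\<lambda>t. cnj (z ^ k) * (h (cis (2 * pi * t) * z) * cnj (cis (2 * pi * t)) ^ k))"
      unfolding set_integrable_def by (intro borel_integrable_compact continuous_intros) auto
    have "((\<lambda>t. cnj (z ^ k) * (h (cis (2 * pi * t) * z) * cnj (cis (2 * pi * t)) ^ k))
        has_integral cnj (z ^ k) * (?c * z ^ k)) {0..1}"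
      using z by (intro has_integral_mult_right circle_average_higher_deriv h) simp
    from trans[OF set_borel_integral_eq_integral(2)[OF integrable] integral_unique[OF this]]
    have "(LINT t:{0..1}|lborel. cnj (z ^ k) * (h (cis (2 * pi * t) * z) * cnj (cis (2 * pi * t)) ^ k))
        = cnj (z ^ k) * (?c * z ^ k)" .
    moreover have "z ^ k * cnj (z ^ k) = (cmod (z ^ k))\<^sup>2"
      using complex_norm_square[of "z ^ k"] by simp
    then have "cnj (z ^ k) * (?c * z ^ k) = ?c * cmod z ^ (2 * k)"
      by (simp add: norm_power power_mult mult.commute mult.left_commute)
    ultimately show ?thesis
      by (simp add: power_mult_distrib mult_ac)
  qed
  have "(\<integral>z. h z * cnj (z ^ k) \<partial>dA_alpha \<alpha>)
      = (\<integral>z. (LINT t:{0..1}|lborel. h (cis (2 * pi * t) * z) * cnj ((cis (2 * pi * t) * z) ^ k)) \<partial>dA_alpha \<alpha>)"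
    using assms(1) integrable by (rule integral_dA_alpha_circle_average)
  also have "\<dots> = (\<integral>z. ?c * cmod z ^ (2 * k) \<partial>dA_alpha \<alpha>)"
    by (rule Bochner_Integration.integral_cong[OF refl circle]) simp
  also have "\<dots> = ?c * dA_moment \<alpha> k"
    by (simp only: integral_mult_right_zero integral_complex_of_real
        integral_dA_alpha_norm_power[OF assms(1)])
  finally show ?thesis .
qed

lemma bounded_holomorphic_in_bergman_space:
  assumes "\<alpha> > -1" and f: "f holomorphic_on ball 0 1" and bound: "\<And>z. cmod z < 1 \<Longrightarrow> cmod (f z) \<le> B"
  shows "f \<in> bergman_space \<alpha>"
proof -
  interpret finite_measure "dA_alpha \<alpha>"
    using assms(1) by (rule finite_measure_dA_alpha)
  have "integrable (dA_alpha \<alpha>) (\<lambda>z. (cmod (f z))\<^sup>2)"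
  proof (rule Bochner_Integration.integrable_bound)
    show "integrable (dA_alpha \<alpha>) (\<lambda>z. B\<^sup>2)"
      by simp
    show "(\<lambda>z. (cmod (f z))\<^sup>2) \<in> borel_measurable (dA_alpha \<alpha>)"
      using f by (intro borel_measurable_dA_alpha_continuous_on continuous_intros holomorphic_on_imp_continuous_on)
    show "AE z in dA_alpha \<alpha>. norm ((cmod (f z))\<^sup>2) \<le> norm (B\<^sup>2)"
      using bound by (intro AE_I2) (auto intro!: power_mono order_trans[OF _ abs_ge_self])
  qed
  with f show ?thesis
    by (simp add: bergman_space_def)
qed

lemma power_in_bergman_space: "\<alpha> > -1 \<Longrightarrow> (\<lambda>z. z ^ k) \<in> bergman_space \<alpha>"
  by (rule bounded_holomorphic_in_bergman_space[where B = 1])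
     (auto intro: holomorphic_intros simp: norm_power power_le_one)

lemma bergman_space_integrable_mult_cnj:
  assumes "\<alpha> > -1" and f: "f \<in> bergman_space \<alpha>" and g: "g \<in> bergman_space \<alpha>"
  shows "integrable (dA_alpha \<alpha>) (\<lambda>z. f z * cnj (g z))"
proof (rule Bochner_Integration.integrable_bound)
  show "integrable (dA_alpha \<alpha>) (\<lambda>z. (cmod (f z))\<^sup>2 + (cmod (g z))\<^sup>2)"
    using f g by (simp add: bergman_space_def)
  show "(\<lambda>z. f z * cnj (g z)) \<in> borel_measurable (dA_alpha \<alpha>)"
    using f g unfolding bergman_space_def
    by (intro borel_measurable_dA_alpha_continuous_on continuous_intros) (auto intro: holomorphic_on_imp_continuous_on)
  have "cmod (f z) * cmod (g z) \<le> (cmod (f z))\<^sup>2 + (cmod (g z))\<^sup>2" for z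
  proof -
    have "0 \<le> (cmod (f z) - cmod (g z))\<^sup>2" by simp
    then have "2 * (cmod (f z) * cmod (g z)) \<le> (cmod (f z))\<^sup>2 + (cmod (g z))\<^sup>2"
      by (simp add: power2_diff)
    moreover have "0 \<le> cmod (f z) * cmod (g z)" by simp
    ultimately show ?thesis by linarith
  qed
  then show "AE z in dA_alpha \<alpha>. norm (f z * cnj (g z)) \<le> norm ((cmod (f z))\<^sup>2 + (cmod (g z))\<^sup>2)"
    by (simp add: norm_mult)
qed

lemma bergman_inner_power:
  assumes "\<alpha> > -1" and "g \<in> bergman_space \<alpha>"
  shows "bergman_inner \<alpha> g (\<lambda>z. z ^ k) = (deriv ^^ k) g 0 / fact k * dA_moment \<alpha> k"
  using assms bergman_space_integrable_mult_cnj[OF assms power_in_bergman_space]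
  unfolding bergman_inner_def
  by (intro integral_dA_alpha_mult_cnj_power) (auto simp: bergman_space_def)

lemma bergman_inner_linear_combination:
  assumes "\<alpha> > -1" and "f\<^sub>1 \<in> bergman_space \<alpha>" "f\<^sub>2 \<in> bergman_space \<alpha>"
    and "g\<^sub>1 \<in> bergman_space \<alpha>" "g\<^sub>2 \<in> bergman_space \<alpha>"
  shows "bergman_inner \<alpha> (\<lambda>z. a * f\<^sub>1 z + b * f\<^sub>2 z) (\<lambda>z. c * g\<^sub>1 z + d * g\<^sub>2 z)
    = a * cnj c * bergman_inner \<alpha> f\<^sub>1 g\<^sub>1 + a * cnj d * bergman_inner \<alpha> f\<^sub>1 g\<^sub>2
      + b * cnj c * bergman_inner \<alpha> f\<^sub>2 g\<^sub>1 + b * cnj d * bergman_inner \<alpha> f\<^sub>2 g\<^sub>2"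
proof -
  have product: "has_bochner_integral (dA_alpha \<alpha>) (\<lambda>z. f z * cnj (g z)) (bergman_inner \<alpha> f g)"
    if "f \<in> bergman_space \<alpha>" "g \<in> bergman_space \<alpha>" for f g
    using bergman_space_integrable_mult_cnj[OF assms(1) that]
    by (simp add: bergman_inner_def has_bochner_integral_integrable)
  have "(a * f\<^sub>1 z + b * f\<^sub>2 z) * cnj (c * g\<^sub>1 z + d * g\<^sub>2 z)
      = a * cnj c * (f\<^sub>1 z * cnj (g\<^sub>1 z)) + a * cnj d * (f\<^sub>1 z * cnj (g\<^sub>2 z))
        + b * cnj c * (f\<^sub>2 z * cnj (g\<^sub>1 z)) + b * cnj d * (f\<^sub>2 z * cnj (g\<^sub>2 z))" for z
    by (simp add: algebra_simps)
  moreover have "has_bochner_integral (dA_alpha \<alpha>)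
      (\<lambda>z. a * cnj c * (f\<^sub>1 z * cnj (g\<^sub>1 z)) + a * cnj d * (f\<^sub>1 z * cnj (g\<^sub>2 z))
        + b * cnj c * (f\<^sub>2 z * cnj (g\<^sub>1 z)) + b * cnj d * (f\<^sub>2 z * cnj (g\<^sub>2 z)))
      (a * cnj c * bergman_inner \<alpha> f\<^sub>1 g\<^sub>1 + a * cnj d * bergman_inner \<alpha> f\<^sub>1 g\<^sub>2
        + b * cnj c * bergman_inner \<alpha> f\<^sub>2 g\<^sub>1 + b * cnj d * bergman_inner \<alpha> f\<^sub>2 g\<^sub>2)"
    using assms by (intro has_bochner_integral_add has_bochner_integral_mult_right product)
  ultimately show ?thesis
    by (simp add: bergman_inner_def has_bochner_integral_integral_eq)
qed

lemma bergman_inner_self: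
  assumes "f \<in> bergman_space \<alpha>"
  shows "bergman_inner \<alpha> f f = (bergman_norm \<alpha> f)\<^sup>2"
proof -
  have "f z * cnj (f z) = of_real ((cmod (f z))\<^sup>2)" for z
    using complex_norm_square[of "f z"] by simp
  then have "bergman_inner \<alpha> f f = of_real (\<integral>z. (cmod (f z))\<^sup>2 \<partial>dA_alpha \<alpha>)"
    by (simp only: bergman_inner_def integral_complex_of_real)
  moreover have "(bergman_norm \<alpha> f)\<^sup>2 = (\<integral>z. (cmod (f z))\<^sup>2 \<partial>dA_alpha \<alpha>)"
    by (simp add: bergman_norm_def integral_nonneg_AE)
  ultimately show ?thesis
    by simp
qed

lemma higher_deriv_mult_eq_0:
  fixes f g :: "complex \<Rightarrow> complex"
  assumes "f holomorphic_on S" "g holomorphic_on S" "open S" "z \<in> S"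
    and "\<forall>i<n. (deriv ^^ i) f z = 0" and "g z = 0"
  shows "(deriv ^^ n) (\<lambda>w. f w * g w) z = 0"
proof -
  have "of_nat (n choose i) * (deriv ^^ i) f z * (deriv ^^ (n - i)) g z = 0" if "i \<le> n" for i
    using assms(5,6) that by (cases "i < n") auto
  then show ?thesis
    by (auto simp: higher_deriv_mult[OF assms(1-4)] intro!: sum.neutral)
qed

section \<open>The test functions \<open>a + c z^m\<close>\<close>

lemma binomial_in_bergman_space:
  assumes "\<alpha> > -1"
  shows "(\<lambda>z. a + c * z ^ m) \<in> bergman_space \<alpha>"
proof (rule bounded_holomorphic_in_bergman_space[OF assms])
  show "(\<lambda>z. a + c * z ^ m) holomorphic_on ball 0 1"
    by (intro holomorphic_intros)
  show "cmod (a + c * z ^ m) \<le> cmod a + cmod c" if "cmod z < 1" for z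
  proof -
    have "cmod (a + c * z ^ m) \<le> cmod a + cmod c * cmod z ^ m"
      using norm_triangle_ineq[of a "c * z ^ m"] by (simp add: norm_mult norm_power)
    also have "\<dots> \<le> cmod a + cmod c"
      using that by (simp add: mult_left_le power_le_one)
    finally show ?thesis .
  qed
qed

lemma bergman_inner_binomial_self:
  assumes "\<alpha> > -1" and "m > 0"
  shows "bergman_inner \<alpha> (\<lambda>z. a + c * z ^ m) (\<lambda>z. a + c * z ^ m)
    = (cmod a)\<^sup>2 + (cmod c)\<^sup>2 * dA_moment \<alpha> m"
proof -
  let ?p = "\<lambda>k z. z ^ k :: complex"
  have p: "?p k \<in> bergman_space \<alpha>" for k
    using assms(1) by (rule power_in_bergman_space)
  have "bergman_inner \<alpha> (?p 0) (?p 0) = 1"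
    using bergman_inner_power[OF assms(1) p, of 0 0] dA_moment_0[OF assms(1)] by simp
  moreover have "bergman_inner \<alpha> (?p 0) (?p m) = 0"
    using bergman_inner_power[OF assms(1) p, of 0 m] \<open>m > 0\<close> by simp
  moreover have "bergman_inner \<alpha> (?p m) (?p 0) = 0"
    using bergman_inner_power[OF assms(1) p, of m 0] \<open>m > 0\<close> by simp
  moreover have "(deriv ^^ m) (?p m) 0 = fact m"
    using higher_deriv_power[of m 0 m 0] by (simp flip: pochhammer_fact)
  then have "bergman_inner \<alpha> (?p m) (?p m) = dA_moment \<alpha> m"
    using bergman_inner_power[OF assms(1) p, of m m] by simp
  moreover have "bergman_inner \<alpha> (\<lambda>z. a * ?p 0 z + c * ?p m z) (\<lambda>z. a * ?p 0 z + c * ?p m z)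
      = a * cnj a * bergman_inner \<alpha> (?p 0) (?p 0) + a * cnj c * bergman_inner \<alpha> (?p 0) (?p m)
        + c * cnj a * bergman_inner \<alpha> (?p m) (?p 0) + c * cnj c * bergman_inner \<alpha> (?p m) (?p m)"
    by (rule bergman_inner_linear_combination[OF assms(1) p p p p])
  ultimately show ?thesis
    by (simp flip: complex_norm_square)
qed

lemma bergman_inner_wcomp_binomial:
  fixes \<phi> \<psi> :: "complex \<Rightarrow> complex"
  assumes "\<alpha> > -1"
    and \<phi>: "\<phi> holomorphic_on ball 0 1" "\<phi> 0 = 0"
    and \<psi>: "\<psi> holomorphic_on ball 0 1" "\<forall>k<m. (deriv ^^ k) \<psi> 0 = 0"
    and "m > 0" and bounded: "bounded_on_bergman \<alpha> (wcomp \<psi> \<phi>)"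
  shows "bergman_inner \<alpha> (wcomp \<psi> \<phi> (\<lambda>z. a + c * z ^ m)) (\<lambda>z. a + c * z ^ m)
    = a * cnj c * ((deriv ^^ m) \<psi> 0 / fact m) * dA_moment \<alpha> m"
proof -
  let ?p = "\<lambda>k z. z ^ k :: complex"
  have p: "?p k \<in> bergman_space \<alpha>" for k
    using assms(1) by (rule power_in_bergman_space)
  have Cp: "wcomp \<psi> \<phi> (?p k) \<in> bergman_space \<alpha>" for k
    using bounded p by (simp add: bounded_on_bergman_def)
  have "\<psi> 0 = 0"
    using \<psi>(2) \<open>m > 0\<close> by (metis funpow_0)
  then have "bergman_inner \<alpha> (wcomp \<psi> \<phi> (?p 0)) (?p 0) = 0"
    and "bergman_inner \<alpha> (wcomp \<psi> \<phi> (?p m)) (?p 0) = 0"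
    using bergman_inner_power[OF assms(1) Cp, of 0 0] bergman_inner_power[OF assms(1) Cp, of m 0]
    by (simp_all add: wcomp_def)
  moreover have "bergman_inner \<alpha> (wcomp \<psi> \<phi> (?p 0)) (?p m) = (deriv ^^ m) \<psi> 0 / fact m * dA_moment \<alpha> m"
    using bergman_inner_power[OF assms(1) Cp, of 0 m] by (simp add: wcomp_def)
  moreover have "(deriv ^^ m) (\<lambda>z. \<psi> z * \<phi> z ^ m) 0 = 0"
    using \<psi> \<phi> \<open>m > 0\<close> by (intro higher_deriv_mult_eq_0[of _ "ball 0 1"]) (auto intro: holomorphic_intros)
  then have "bergman_inner \<alpha> (wcomp \<psi> \<phi> (?p m)) (?p m) = 0"
    using bergman_inner_power[OF assms(1) Cp, of m m] by (simp add: wcomp_def)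
  moreover have "wcomp \<psi> \<phi> (\<lambda>z. a + c * z ^ m) = (\<lambda>z. a * wcomp \<psi> \<phi> (?p 0) z + c * wcomp \<psi> \<phi> (?p m) z)"
    by (simp add: wcomp_def fun_eq_iff algebra_simps)
  moreover have "bergman_inner \<alpha> (\<lambda>z. a * wcomp \<psi> \<phi> (?p 0) z + c * wcomp \<psi> \<phi> (?p m) z)
        (\<lambda>z. a * ?p 0 z + c * ?p m z)
      = a * cnj a * bergman_inner \<alpha> (wcomp \<psi> \<phi> (?p 0)) (?p 0)
        + a * cnj c * bergman_inner \<alpha> (wcomp \<psi> \<phi> (?p 0)) (?p m)
        + c * cnj a * bergman_inner \<alpha> (wcomp \<psi> \<phi> (?p m)) (?p 0)
        + c * cnj c * bergman_inner \<alpha> (wcomp \<psi> \<phi> (?p m)) (?p m)"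
    by (rule bergman_inner_linear_combination[OF assms(1) Cp Cp p p])
  ultimately show ?thesis
    by simp
qed

lemma wcomp_binomial_in_numerical_range:
  fixes \<phi> \<psi> :: "complex \<Rightarrow> complex"
  assumes "\<alpha> > -1"
    and "\<phi> holomorphic_on ball 0 1" "\<phi> 0 = 0"
    and "\<psi> holomorphic_on ball 0 1" "\<forall>k<m. (deriv ^^ k) \<psi> 0 = 0"
    and "m > 0" and "bounded_on_bergman \<alpha> (wcomp \<psi> \<phi>)"
    and unit: "(cmod a)\<^sup>2 + (cmod c)\<^sup>2 * dA_moment \<alpha> m = 1"
  shows "a * cnj c * ((deriv ^^ m) \<psi> 0 / fact m) * dA_moment \<alpha> m \<in> numerical_range \<alpha> (wcomp \<psi> \<phi>)"
proof -
  let ?f = "\<lambda>z. a + c * z ^ m"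
  have f: "?f \<in> bergman_space \<alpha>"
    using assms(1) by (rule binomial_in_bergman_space)
  have "(bergman_norm \<alpha> ?f)\<^sup>2 = 1"
    using bergman_inner_self[OF f] bergman_inner_binomial_self[OF assms(1) \<open>m > 0\<close>, of a c] unit
    by (metis of_real_1 of_real_eq_iff)
  then have "bergman_norm \<alpha> ?f = 1"
    by (simp add: bergman_norm_def)
  with f bergman_inner_wcomp_binomial[OF assms(1-7), of a c] show ?thesis
    unfolding numerical_range_def by (auto intro!: exI[of _ ?f])
qed

lemma half_sqrt_disc_as_product:
  fixes w :: real and l :: complex
  assumes "w > 0" and "cmod l \<le> sqrt w / 2"
  obtains a c :: complex where "(cmod a)\<^sup>2 + (cmod c)\<^sup>2 * w = 1" and "l = a * cnj c * w"
proof -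
  define \<rho> where "\<rho> = 2 * cmod l / sqrt w"
  have "0 \<le> \<rho>" "\<rho> \<le> 1"
    using assms by (auto simp: \<rho>_def field_simps)
  define s t where "s = sqrt (1 + \<rho>)" and "t = sqrt (1 - \<rho>)"
  have s: "s\<^sup>2 = 1 + \<rho>" "1 \<le> s" and t: "t\<^sup>2 = 1 - \<rho>" "0 \<le> t"
    using \<open>0 \<le> \<rho>\<close> \<open>\<rho> \<le> 1\<close> by (simp_all add: s_def t_def)
  define a b where "a = (s + t) / 2" and "b = (s - t) / 2"
  have "a > 0"
    using s t by (simp add: a_def)
  have ab: "a\<^sup>2 + b\<^sup>2 = 1" "a * b * sqrt w = cmod l"
  proof -
    have "a\<^sup>2 + b\<^sup>2 = (s\<^sup>2 + t\<^sup>2) / 2" "a * b = (s\<^sup>2 - t\<^sup>2) / 4"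
      by (simp_all add: a_def b_def power2_eq_square field_simps)
    then show "a\<^sup>2 + b\<^sup>2 = 1" "a * b * sqrt w = cmod l"
      using s t assms(1) by (simp_all add: \<rho>_def)
  qed
  define c where "c = cnj l / (a * w)"
  have "l = a * cnj c * w"
    using \<open>a > 0\<close> assms(1) by (simp add: c_def)
  moreover have "(cmod c)\<^sup>2 * w = b\<^sup>2"
  proof -
    have "(cmod c)\<^sup>2 * w = (a * b * sqrt w)\<^sup>2 / (a\<^sup>2 * w)"
      using \<open>a > 0\<close> assms(1) ab(2) by (simp add: c_def norm_divide norm_mult power2_eq_square field_simps)
    also have "\<dots> = b\<^sup>2"
      using \<open>a > 0\<close> assms(1) by (simp add: field_simps)
    finally show ?thesis .
  qed
  ultimately show ?thesis
    using ab(1) by (intro that[of a c]) simp_all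
qed

lemma dA_moment_radius:
  assumes "\<alpha> > -1"
  shows "fact m * Gamma (\<alpha> + 2) / (Gamma (real m + \<alpha> + 2) + fact m * Gamma (\<alpha> + 2))
    = dA_moment \<alpha> m / (1 + dA_moment \<alpha> m)"
proof -
  have "Gamma (real m + \<alpha> + 2) > 0" "Gamma (\<alpha> + 2) > 0"
    using assms by simp_all
  then show ?thesis
    by (simp add: dA_moment_def field_simps)
qed

lemma div_one_plus_le_half_sqrt:
  fixes w :: real
  assumes "w \<ge> 0"
  shows "w / (1 + w) \<le> sqrt w / 2"
proof -
  have "0 \<le> (1 - sqrt w)\<^sup>2" by simp
  then have "2 * sqrt w \<le> 1 + w"
    using assms by (simp add: power2_diff)
  then have "sqrt w * (2 * sqrt w) \<le> sqrt w * (1 + w)"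
    using assms by (intro mult_left_mono) simp_all
  moreover have "sqrt w * (2 * sqrt w) = 2 * w"
    using assms by (metis mult.left_commute real_sqrt_mult_self abs_of_nonneg)
  ultimately have "2 * w \<le> sqrt w * (1 + w)"
    by linarith
  then show ?thesis
    using assms by (simp add: field_simps)
qed

theorem theorem5p1:
  fixes \<alpha> :: real and \<phi> \<psi> :: "complex \<Rightarrow> complex" and m :: nat
  assumes "\<alpha> > -1"
    and "\<phi> holomorphic_on ball 0 1" and "\<phi> ` ball 0 1 \<subseteq> ball 0 1" and "\<phi> 0 = 0"
    and "\<psi> holomorphic_on ball 0 1"
    and "m > 0" and "\<forall>k<m. (deriv ^^ k) \<psi> 0 = 0" and "(deriv ^^ m) \<psi> 0 \<noteq> 0"
    and "bounded_on_bergman \<alpha> (wcomp \<psi> \<phi>)"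
  shows "cball 0 (fact m * Gamma (\<alpha> + 2) / (Gamma (real m + \<alpha> + 2) + fact m * Gamma (\<alpha> + 2))
            * cmod ((deriv ^^ m) \<psi> 0 / fact m))
         \<subseteq> numerical_range \<alpha> (wcomp \<psi> \<phi>)"
proof
  fix l :: complex
  assume l: "l \<in> cball 0 (fact m * Gamma (\<alpha> + 2) / (Gamma (real m + \<alpha> + 2) + fact m * Gamma (\<alpha> + 2))
            * cmod ((deriv ^^ m) \<psi> 0 / fact m))"
  define A where "A = (deriv ^^ m) \<psi> 0 / fact m"
  define w where "w = dA_moment \<alpha> m"
  have "w > 0" "A \<noteq> 0"
    using assms by (simp_all add: w_def A_def dA_moment_pos)
  have "cmod l \<le> w / (1 + w) * cmod A"
    using l by (simp add: dA_moment_radius[OF assms(1)] A_def w_def)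
  also have "\<dots> \<le> sqrt w / 2 * cmod A"
    using \<open>w > 0\<close> by (intro mult_right_mono div_one_plus_le_half_sqrt) simp_all
  finally have "cmod (l / A) \<le> sqrt w / 2"
    using \<open>A \<noteq> 0\<close> by (simp add: norm_divide divide_le_eq)
  with \<open>w > 0\<close> obtain a c where "(cmod a)\<^sup>2 + (cmod c)\<^sup>2 * w = 1" and "l / A = a * cnj c * w"
    by (rule half_sqrt_disc_as_product)
  moreover from this(2) have "l = a * cnj c * A * w"
    using \<open>A \<noteq> 0\<close> by (simp add: field_simps)
  ultimately show "l \<in> numerical_range \<alpha> (wcomp \<psi> \<phi>)"
    using wcomp_binomial_in_numerical_range[of \<alpha> \<phi> \<psi> m a c] assms
    by (simp add: A_def w_def)
qed

end
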